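(* Let $K\ge1$, let $g_1,\dots,g_K$ be positive integers, let $w\in\mathbb{C}$ and $y_{i,\ell}\in\mathbb{C}$ ($1\le i\le K$, $1\le\ell\le g_i$). Treat $x$ and $\overline{x}$ as two independent variables, and for a rational function $R(x,\overline{x})$ let $\overline{R}$ denote the function obtained by conjugating all coefficients and interchanging the roles of $x$ and $\overline{x}$. Define recursively $$Q_1=-\sum_{\ell=1}^{g_1}\frac{1}{\overline{x}-\overline{y_{1,\ell}}},\qquad Q_j=-\sum_{\ell=1}^{g_j}\frac{1}{\overline{x}-\overline{y_{j,\ell}}+\sum_{i=1}^{j-1}\overline{Q_i}}\quad(2\le j\le K),$$ $$D_1=\prod_{\ell=1}^{g_1}(\overline{x}-\overline{y_{1,\ell}}),\qquad D_j=\prod_{\ell=1}^{g_j}\Big(\overline{x}-\overline{y_{j,\ell}}+\sum_{i=1}^{j-1}\overline{Q_i}\Big)\cdot\Big(\prod_{k=1}^{j-1}\overline{D_k}\Big)^{g_j}\quad(2\le j\le K),$$ (each $D_j$ is a polynomial in $x,\overline{x}$), and set $$P=\Big(x-w+\sum_{k=1}^K Q_k\Big)\prod_{i=1}^K D_i,\qquad \hat P=(x-w)\prod_{i=1}^K D_i .$$ Let $F(Z)=\prod_{i=1}^K(1+g_iZ)$, $E_K=\frac{F(1)+F(-1)}{2}$ and $O_K=\frac{F(1)-F(-1)}{2}$. Then (a) $\deg(P)=\deg(\hat P)$; (b) $\deg(P)=(E_K,O_K)$.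
   Context: For a polynomial $\rho$ in two variables $x,\overline{x}$, the degree vector is $\deg(\rho)=(\deg_x\rho,\deg_{\overline{x}}\rho)$, where $\deg_x\rho$ is the highest exponent of $x$ appearing in $\rho$ and $\deg_{\overline{x}}\rho$ the highest exponent of $\overline{x}$. The polynomial $P$ is the "lensing polynomial" obtained by clearing denominators in the multiplane point-mass lensing equation, with all masses and inter-plane scaling constants set equal to $1$. *)

theory Defs
  imports Complex_Main "HOL-Computational_Algebra.Polynomial" "HOL-Computational_Algebra.Fraction_Field"
begin

text \<open>Bivariate polynomials in x and xbar: type complex poly poly.
  The outer variable is x, the inner (coefficient) variable is xbar:
  p = sum_i (coeff p i)(xbar) * x^i.\<close>

type_synonym bipoly = "complex poly poly"
type_synonym birat = "bipoly fract"

definition degx :: "bipoly \<Rightarrow> nat" where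
  "degx p = degree p"

definition degxbar :: "bipoly \<Rightarrow> nat" where
  "degxbar p = Max ((\<lambda>i. degree (coeff p i)) ` {..degree p})"

definition degvec :: "bipoly \<Rightarrow> nat \<times> nat" where
  "degvec p = (degx p, degxbar p)"

text \<open>Bar operation on polynomials: conjugate coefficients and swap x and xbar.\<close>
definition barpoly :: "bipoly \<Rightarrow> bipoly" where
  "barpoly p = (\<Sum>i\<le>degree p. \<Sum>j\<le>degree (coeff p i).
      monom (monom (cnj (coeff (coeff p i) j)) i) j)"

definition barrat :: "birat \<Rightarrow> birat" where
  "barrat r = (let (a, b) = (SOME (a, b). b \<noteq> 0 \<and> r = Fract a b)
               in Fract (barpoly a) (barpoly b))"

definition polyF :: "bipoly \<Rightarrow> birat" where
  "polyF p = Fract p 1"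

definition varX :: birat where "varX = polyF [:0, 1:]"
definition varXbar :: birat where "varXbar = polyF [:[:0, 1:]:]"
definition constF :: "complex \<Rightarrow> birat" where "constF c = polyF [:[:c:]:]"

text \<open>Indices are 0-based: lenses i = 0..K-1, and l = 0..g i - 1.
  QS g y n = sum_{i<n} bar(Q_i).\<close>

definition Qterm :: "(nat \<Rightarrow> nat) \<Rightarrow> (nat \<Rightarrow> nat \<Rightarrow> complex) \<Rightarrow> nat \<Rightarrow> birat \<Rightarrow> birat" where
  "Qterm g y j S = - (\<Sum>l<g j. 1 / (varXbar - constF (cnj (y j l)) + S))"

fun QS :: "(nat \<Rightarrow> nat) \<Rightarrow> (nat \<Rightarrow> nat \<Rightarrow> complex) \<Rightarrow> nat \<Rightarrow> birat" where
  "QS g y 0 = 0"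
| "QS g y (Suc n) = QS g y n + barrat (Qterm g y n (QS g y n))"

definition Q :: "(nat \<Rightarrow> nat) \<Rightarrow> (nat \<Rightarrow> nat \<Rightarrow> complex) \<Rightarrow> nat \<Rightarrow> birat" where
  "Q g y j = Qterm g y j (QS g y j)"

text \<open>DS g y n = prod_{k<n} bar(D_k).\<close>
fun DS :: "(nat \<Rightarrow> nat) \<Rightarrow> (nat \<Rightarrow> nat \<Rightarrow> complex) \<Rightarrow> nat \<Rightarrow> birat" where
  "DS g y 0 = 1"
| "DS g y (Suc n) = DS g y n *
     barrat ((\<Prod>l<g n. varXbar - constF (cnj (y n l)) + QS g y n) * DS g y n ^ g n)"

definition D :: "(nat \<Rightarrow> nat) \<Rightarrow> (nat \<Rightarrow> nat \<Rightarrow> complex) \<Rightarrow> nat \<Rightarrow> birat" where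
  "D g y j = (\<Prod>l<g j. varXbar - constF (cnj (y j l)) + QS g y j) * DS g y j ^ g j"

definition lensP :: "nat \<Rightarrow> (nat \<Rightarrow> nat) \<Rightarrow> (nat \<Rightarrow> nat \<Rightarrow> complex) \<Rightarrow> complex \<Rightarrow> birat" where
  "lensP K g y w = (varX - constF w + (\<Sum>k<K. Q g y k)) * (\<Prod>i<K. D g y i)"

definition lensPhat :: "nat \<Rightarrow> (nat \<Rightarrow> nat) \<Rightarrow> (nat \<Rightarrow> nat \<Rightarrow> complex) \<Rightarrow> complex \<Rightarrow> birat" where
  "lensPhat K g y w = (varX - constF w) * (\<Prod>i<K. D g y i)"

definition FK :: "nat \<Rightarrow> (nat \<Rightarrow> nat) \<Rightarrow> int \<Rightarrow> int" where
  "FK K g z = (\<Prod>i<K. 1 + int (g i) * z)"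

definition EK :: "nat \<Rightarrow> (nat \<Rightarrow> nat) \<Rightarrow> int" where
  "EK K g = (FK K g 1 + FK K g (-1)) div 2"

definition OK :: "nat \<Rightarrow> (nat \<Rightarrow> nat) \<Rightarrow> int" where
  "OK K g = (FK K g 1 - FK K g (-1)) div 2"

end

theory Submission
  imports Defs "HOL-Library.Product_Order" "HOL-Library.Product_Plus"
begin

(*
  Call a bivariate polynomial a corner polynomial if it contains the monomial
  x^(deg_x) xbar^(deg_xbar); degree vectors of corner polynomials add under multiplication,
  and adding a polynomial of smaller degree vector changes neither the corner nor the
  degree vector. A rational function r is a proper fraction over a corner polynomial a if
  r = b / a with deg b <= deg a componentwise; proper fractions are closed under negation,
  sums (with the product of the denominators) and bar.

  By induction on j, DS_j = prod_{k<j} bar D_k is a corner polynomial T of degree vector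
  (t, u) over which QS_j is a proper fraction. Then every factor xbar - c + QS_j of D_j is
  f / T with f = (xbar - c) T + S a corner polynomial of degree vector (t, u + 1), so D_j is
  the corner polynomial prod f of degree vector g_j (t, u + 1), and Q_j = - sum T / f is a
  proper fraction over it; bar swaps the two degrees, which gives the recursion for
  (t, u). Finally, in P the term (x - w) prod D_i strictly dominates the proper part
  (sum Q_k) prod D_i because of the extra factor x, so deg P = deg P^ = (1 + u_K, t_K);
  along the recursion u + 1 +- t is multiplied by 1 +- g_j, which gives F(1) and F(-1).
*)

lemma coeff_coeff_barpoly: "coeff (coeff (barpoly p) i) j = cnj (coeff (coeff p j) i)"
proof -
  have "coeff (coeff (barpoly p) i) j = (\<Sum>a\<le>degree p. \<Sum>b\<le>degree (coeff p a).
      if a = j then if b = i then cnj (coeff (coeff p a) b) else 0 else 0)"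
    unfolding barpoly_def coeff_sum by (intro sum.cong refl) auto
  also have "\<dots> = (\<Sum>a\<le>degree p.
      if a = j then \<Sum>b\<le>degree (coeff p a). if b = i then cnj (coeff (coeff p a) b) else 0 else 0)"
    by (intro sum.cong refl) auto
  also have "\<dots> = (if j \<le> degree p then if i \<le> degree (coeff p j)
      then cnj (coeff (coeff p j) i) else 0 else 0)"
    by (simp add: sum.delta)
  also have "\<dots> = cnj (coeff (coeff p j) i)"
    by (auto simp: coeff_eq_0)
  finally show ?thesis .
qed

lemma bipoly_eqI: "(\<And>i j. coeff (coeff p i) j = coeff (coeff q i) j) \<Longrightarrow> (p :: bipoly) = q"
  by (simp add: poly_eq_iff)

lemma barpoly_barpoly [simp]: "barpoly (barpoly p) = p"
  by (rule bipoly_eqI) (simp add: coeff_coeff_barpoly)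

lemma barpoly_add [simp]: "barpoly (p + q) = barpoly p + barpoly q"
  by (rule bipoly_eqI) (simp add: coeff_coeff_barpoly)

lemma barpoly_0 [simp]: "barpoly 0 = 0"
  by (rule bipoly_eqI) (simp add: coeff_coeff_barpoly)

lemma barpoly_1 [simp]: "barpoly 1 = 1"
  by (rule bipoly_eqI) (simp add: coeff_coeff_barpoly coeff_1)

lemma barpoly_mult [simp]: "barpoly (p * q) = barpoly p * barpoly q"
proof (rule bipoly_eqI)
  fix i j
  show "coeff (coeff (barpoly (p * q)) i) j = coeff (coeff (barpoly p * barpoly q) i) j"
    by (simp add: coeff_coeff_barpoly coeff_mult coeff_sum cnj_sum sum_distrib_left
        sum_distrib_right sum.swap[of _ "{..i}"])
qed

lemma barpoly_eq_0_iff [simp]: "barpoly p = 0 \<longleftrightarrow> p = 0"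
  by (metis barpoly_0 barpoly_barpoly)

lemma degree_coeff_le_degxbar: "degree (coeff p i) \<le> degxbar p"
proof (cases "i \<le> degree p")
  case True
  then show ?thesis unfolding degxbar_def by (intro Max_ge) auto
next
  case False
  then show ?thesis by (simp add: coeff_eq_0)
qed

lemma degx_barpoly: "degx (barpoly p) = degxbar p"
proof (rule antisym)
  show "degx (barpoly p) \<le> degxbar p"
    unfolding degx_def
  proof (rule degree_le, intro allI impI)
    fix n assume "degxbar p < n"
    then have "degree (coeff p m) < n" for m
      using degree_coeff_le_degxbar[of p m] by simp
    then show "coeff (barpoly p) n = 0"
      by (intro poly_eqI) (simp add: coeff_coeff_barpoly coeff_eq_0)
  qed
next
  have "degxbar p \<in> (\<lambda>i. degree (coeff p i)) ` {..degree p}"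
    unfolding degxbar_def by (rule Max_in) auto
  then obtain i where i: "degxbar p = degree (coeff p i)"
    by auto
  show "degxbar p \<le> degx (barpoly p)"
  proof (cases "coeff p i = 0")
    case False
    then have "coeff (coeff (barpoly p) (degxbar p)) i \<noteq> 0"
      using i by (simp add: coeff_coeff_barpoly)
    then show ?thesis
      unfolding degx_def by (metis coeff_0 le_degree)
  qed (use i in simp)
qed

lemma degxbar_barpoly: "degxbar (barpoly p) = degx p"
  by (metis degx_barpoly barpoly_barpoly)

lemma degvec_barpoly: "degvec (barpoly p) = prod.swap (degvec p)"
  by (simp add: degvec_def degx_barpoly degxbar_barpoly)

lemma degvec_0 [simp]: "degvec 0 = (0, 0)"
  by (simp add: degvec_def degx_def degxbar_def)

lemma degvec_1 [simp]: "degvec 1 = (0, 0)"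
  by (simp add: degvec_def degx_def degxbar_def)

lemma degvec_uminus [simp]: "degvec (- p) = degvec p"
  by (simp add: degvec_def degx_def degxbar_def)

lemma degvec_add_le: "degvec p \<le> v \<Longrightarrow> degvec q \<le> v \<Longrightarrow> degvec (p + q) \<le> v"
  using degree_add_le[of "barpoly p"] degree_add_le[of p]
  by (auto simp: degvec_def less_eq_prod_def degx_def simp flip: degx_barpoly)

lemma degvec_mult_le: "degvec (p * q) \<le> degvec p + degvec q"
  using degree_mult_le[of p q] degree_mult_le[of "barpoly p" "barpoly q"]
  by (simp add: degvec_def less_eq_prod_def degx_def flip: degx_barpoly)

lemma degvec_mult: "p \<noteq> 0 \<Longrightarrow> q \<noteq> 0 \<Longrightarrow> degvec (p * q) = degvec p + degvec q"
  using degree_mult_eq[of p q] degree_mult_eq[of "barpoly p" "barpoly q"]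
  by (simp add: degvec_def degx_def flip: degx_barpoly)

lemma degvec_prod: "(\<And>i. i \<in> A \<Longrightarrow> f i \<noteq> 0) \<Longrightarrow> degvec (prod f A) = (\<Sum>i\<in>A. degvec (f i))"
  by (induction A rule: infinite_finite_induct) (auto simp: degvec_mult zero_prod_def)

definition has_corner :: "bipoly \<Rightarrow> bool" where
  "has_corner p \<longleftrightarrow> coeff (coeff p (degx p)) (degxbar p) \<noteq> 0"

lemma has_corner_nonzero: "has_corner p \<Longrightarrow> p \<noteq> 0"
  unfolding has_corner_def by auto

lemma has_corner_barpoly: "has_corner p \<Longrightarrow> has_corner (barpoly p)"
  unfolding has_corner_def by (simp add: degx_barpoly degxbar_barpoly coeff_coeff_barpoly)

lemma has_corner_mult:
  assumes p: "has_corner p" and q: "has_corner q"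
  shows "has_corner (p * q)"
proof -
  define a where "a = coeff p (degx p)"
  define b where "b = coeff q (degx q)"
  have "coeff a (degxbar p) \<noteq> 0" "coeff b (degxbar q) \<noteq> 0"
    using p q unfolding has_corner_def a_def b_def by auto
  moreover from this have "degree a = degxbar p" "degree b = degxbar q"
    using degree_coeff_le_degxbar[of p] degree_coeff_le_degxbar[of q]
    unfolding a_def b_def by (auto intro: antisym le_degree)
  ultimately have "coeff (a * b) (degxbar p + degxbar q) \<noteq> 0"
    using lead_coeff_mult[of a b] degree_mult_eq[of a b] by (metis coeff_0 mult_eq_0_iff)
  moreover have "coeff (p * q) (degx (p * q)) = a * b"
    using lead_coeff_mult[of p q] unfolding a_def b_def degx_def by simp
  moreover have "degxbar (p * q) = degxbar p + degxbar q"
    using degvec_mult[of p q] has_corner_nonzero[OF p] has_corner_nonzero[OF q]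
    by (simp add: degvec_def)
  ultimately show ?thesis
    unfolding has_corner_def by simp
qed

lemma has_corner_1 [simp]: "has_corner 1"
  by (simp add: has_corner_def degx_def degxbar_def)

lemma has_corner_prod: "(\<And>i. i \<in> A \<Longrightarrow> has_corner (f i)) \<Longrightarrow> has_corner (prod f A)"
  by (induction A rule: infinite_finite_induct) (auto intro: has_corner_mult)

lemma has_corner_add_lower:
  assumes p: "has_corner p" and q: "degvec q < degvec p"
  shows "has_corner (p + q)" and "degvec (p + q) = degvec p"
proof -
  have "coeff (coeff q (degx p)) (degxbar p) = 0"
  proof (cases "degx q < degx p")
    case True
    then show ?thesis by (simp add: degx_def coeff_eq_0)
  next
    case False
    then have "degree (coeff q (degx p)) < degxbar p"
      using q degree_coeff_le_degxbar[of q "degx p"]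
      by (auto simp: degvec_def less_prod_def less_eq_prod_def)
    then show ?thesis by (simp add: coeff_eq_0)
  qed
  then have corner: "coeff (coeff (p + q) (degx p)) (degxbar p) \<noteq> 0"
    using p by (simp add: has_corner_def)
  have "degx p \<le> degx (p + q)"
    using corner unfolding degx_def by (metis coeff_0 le_degree)
  moreover have "degxbar p \<le> degxbar (p + q)"
    using corner degree_coeff_le_degxbar[of "p + q" "degx p"] le_degree order_trans by blast
  ultimately have "degvec p \<le> degvec (p + q)"
    by (simp add: degvec_def)
  moreover have "degvec (p + q) \<le> degvec p"
    using q by (intro degvec_add_le) (auto simp: less_prod_def)
  ultimately show "degvec (p + q) = degvec p"
    using antisym by blast
  with corner show "has_corner (p + q)"
    by (simp add: has_corner_def degvec_def)
qed

lemma polyF_add [simp]: "polyF (p + q) = polyF p + polyF q"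
  by (simp add: polyF_def)

lemma polyF_mult [simp]: "polyF (p * q) = polyF p * polyF q"
  by (simp add: polyF_def)

lemma polyF_uminus [simp]: "polyF (- p) = - polyF p"
  by (simp add: polyF_def)

lemma polyF_diff [simp]: "polyF (p - q) = polyF p - polyF q"
  by (simp add: polyF_def)

lemma polyF_0 [simp]: "polyF 0 = 0"
  by (simp add: polyF_def Zero_fract_def)

lemma polyF_1 [simp]: "polyF 1 = 1"
  by (simp add: polyF_def One_fract_def)

lemma polyF_eq_0_iff [simp]: "polyF p = 0 \<longleftrightarrow> p = 0"
  by (simp add: polyF_def eq_fract Zero_fract_def)

lemma polyF_prod: "polyF (prod f A) = (\<Prod>x\<in>A. polyF (f x))"
  by (induction A rule: infinite_finite_induct) auto

lemma Fract_eq_polyF_divide: "b \<noteq> 0 \<Longrightarrow> Fract a b = polyF a / polyF b"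
  by (simp add: polyF_def eq_fract nonzero_eq_divide_eq Zero_fract_def)

lemma barrat_Fract:
  assumes "b \<noteq> 0"
  shows "barrat (Fract a b) = Fract (barpoly a) (barpoly b)"
proof -
  obtain a' b' where rep: "(SOME (a', b'). b' \<noteq> 0 \<and> Fract a b = Fract a' b') = (a', b')"
    by fastforce
  have "\<exists>x. case x of (a', b') \<Rightarrow> b' \<noteq> 0 \<and> Fract a b = Fract a' b'"
    using assms by auto
  then have "b' \<noteq> 0" "Fract a b = Fract a' b'"
    using someI_ex[of "\<lambda>(a', b'). b' \<noteq> 0 \<and> Fract a b = Fract a' b'"] rep by auto
  then have "barpoly a * barpoly b' = barpoly a' * barpoly b"
    using assms by (simp add: eq_fract flip: barpoly_mult)
  then show ?thesis
    using assms \<open>b' \<noteq> 0\<close> rep by (simp add: barrat_def eq_fract)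
qed

lemma barrat_polyF: "barrat (polyF p) = polyF (barpoly p)"
  unfolding polyF_def by (simp add: barrat_Fract)

lemma barrat_polyF_divide:
  "a \<noteq> 0 \<Longrightarrow> barrat (polyF b / polyF a) = polyF (barpoly b) / polyF (barpoly a)"
  by (simp add: barrat_Fract flip: Fract_eq_polyF_divide)

definition proper_fraction :: "birat \<Rightarrow> bipoly \<Rightarrow> bool" where
  "proper_fraction r a \<longleftrightarrow> has_corner a \<and> (\<exists>b. r = polyF b / polyF a \<and> degvec b \<le> degvec a)"

lemma proper_fractionI: "has_corner a \<Longrightarrow> degvec b \<le> degvec a \<Longrightarrow> proper_fraction (polyF b / polyF a) a"
  unfolding proper_fraction_def by blast

lemma proper_fraction_0: "proper_fraction 0 1"
  using proper_fractionI[of 1 0] by simp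

lemma proper_fraction_uminus: "proper_fraction r a \<Longrightarrow> proper_fraction (- r) a"
  unfolding proper_fraction_def by (metis degvec_uminus minus_divide_left polyF_uminus)

lemma proper_fraction_add:
  assumes "proper_fraction r a" "proper_fraction s c"
  shows "proper_fraction (r + s) (a * c)"
proof -
  obtain b d where r: "r = polyF b / polyF a" "degvec b \<le> degvec a"
    and s: "s = polyF d / polyF c" "degvec d \<le> degvec c"
    and corners: "has_corner a" "has_corner c"
    using assms unfolding proper_fraction_def by blast
  then have nz: "a \<noteq> 0" "c \<noteq> 0"
    by (auto dest: has_corner_nonzero)
  have sum: "r + s = polyF (b * c + a * d) / polyF (a * c)"
    using r s nz by (simp add: field_simps)
  have "degvec (b * c + a * d) \<le> degvec (a * c)"
  proof (rule degvec_add_le)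
    show "degvec (b * c) \<le> degvec (a * c)"
      using degvec_mult_le[of b c] r(2) by (simp add: degvec_mult nz less_eq_prod_def)
    show "degvec (a * d) \<le> degvec (a * c)"
      using degvec_mult_le[of a d] s(2) by (simp add: degvec_mult nz less_eq_prod_def)
  qed
  then show ?thesis
    unfolding sum using corners by (intro proper_fractionI has_corner_mult)
qed

lemma proper_fraction_sum:
  "(\<And>k. k \<in> A \<Longrightarrow> proper_fraction (r k) (a k)) \<Longrightarrow> proper_fraction (\<Sum>k\<in>A. r k) (\<Prod>k\<in>A. a k)"
  by (induction A rule: infinite_finite_induct) (auto intro: proper_fraction_0 proper_fraction_add)

lemma proper_fraction_barrat:
  assumes "proper_fraction r a"
  shows "proper_fraction (barrat r) (barpoly a)"
proof -
  obtain b where b: "r = polyF b / polyF a" "degvec b \<le> degvec a" and a: "has_corner a"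
    using assms unfolding proper_fraction_def by blast
  then have "barrat r = polyF (barpoly b) / polyF (barpoly a)"
    by (simp add: barrat_polyF_divide has_corner_nonzero)
  then show ?thesis
    using b(2) a by (auto simp: degvec_barpoly less_eq_prod_def intro!: proper_fractionI has_corner_barpoly)
qed

lemma polyF_add_proper_fraction:
  assumes r: "proper_fraction r a" and L: "has_corner L" "degx L > 0"
  shows "\<exists>p. (polyF L + r) * polyF a = polyF p \<and> degvec p = degvec (L * a)"
proof -
  obtain b where b: "r = polyF b / polyF a" "degvec b \<le> degvec a" and a: "has_corner a"
    using r unfolding proper_fraction_def by blast
  have "degvec (L * a) = degvec L + degvec a"
    using L a by (simp add: degvec_mult has_corner_nonzero)
  with b(2) L(2) have "degvec b < degvec (L * a)"
    by (auto simp: less_prod_def less_eq_prod_def degvec_def)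
  then have "degvec (L * a + b) = degvec (L * a)"
    using L a by (simp add: has_corner_add_lower has_corner_mult)
  moreover have "(polyF L + r) * polyF a = polyF (L * a + b)"
    using b a by (simp add: field_simps has_corner_nonzero)
  ultimately show ?thesis
    by blast
qed

lemma varX_minus_constF: "varX - constF w = polyF [:[:- w:], 1:]"
proof -
  have "[:0, 1:] - [:[:w:]:] = [:[:- w:], 1:]"
    by simp
  then show ?thesis
    unfolding varX_def constF_def by (metis polyF_diff)
qed

lemma varXbar_minus_constF: "varXbar - constF c = polyF [:[:- c, 1:]:]"
proof -
  have "[:[:0, 1:]:] - [:[:c:]:] = [:[:- c, 1:]:]"
    by simp
  then show ?thesis
    unfolding varXbar_def constF_def by (metis polyF_diff)
qed

lemma corner_x_minus_const: "has_corner [:[:- w:], 1:]" "degvec [:[:- w:], 1:] = (1, 0)"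
  by (simp_all add: has_corner_def degvec_def degx_def degxbar_def atMost_Suc)

lemma corner_xbar_minus_const: "has_corner [:[:- c, 1:]:]" "degvec [:[:- c, 1:]:] = (0, 1)"
  by (simp_all add: has_corner_def degvec_def degx_def degxbar_def)

lemma corner_xbar_minus_const_mult_add:
  assumes T: "has_corner T" and S: "degvec S \<le> degvec T"
  shows "has_corner ([:[:- c, 1:]:] * T + S)" "degvec ([:[:- c, 1:]:] * T + S) = degvec T + (0, 1)"
proof -
  define X where "X = [:[:- c, 1:]:]"
  have X: "has_corner X" "degvec X = (0, 1)"
    unfolding X_def by (fact corner_xbar_minus_const)+
  have XT: "has_corner (X * T)" "degvec (X * T) = degvec T + (0, 1)"
    using X T by (simp_all add: has_corner_mult degvec_mult has_corner_nonzero add.commute)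
  have "degvec S < degvec (X * T)"
    using S unfolding XT(2) by (auto simp: less_prod_def less_eq_prod_def)
  then show "has_corner ([:[:- c, 1:]:] * T + S)" "degvec ([:[:- c, 1:]:] * T + S) = degvec T + (0, 1)"
    using has_corner_add_lower[OF XT(1)] XT(2) unfolding X_def by auto
qed

definition D_degvec :: "nat \<Rightarrow> nat \<times> nat \<Rightarrow> nat \<times> nat" where
  "D_degvec m v = (m * fst v, m * (snd v + 1))"

fun DS_degvec :: "(nat \<Rightarrow> nat) \<Rightarrow> nat \<Rightarrow> nat \<times> nat" where
  "DS_degvec g 0 = (0, 0)"
| "DS_degvec g (Suc j) = DS_degvec g j + prod.swap (D_degvec (g j) (DS_degvec g j))"

lemma D_poly_Q_proper_step:
  assumes DS: "DS g y j = polyF T" and QS: "proper_fraction (QS g y j) T"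
  shows "\<exists>d. D g y j = polyF d \<and> proper_fraction (Q g y j) d \<and> degvec d = D_degvec (g j) (degvec T)"
proof -
  obtain S where S: "QS g y j = polyF S / polyF T" "degvec S \<le> degvec T" and T: "has_corner T"
    using QS unfolding proper_fraction_def by blast
  have T0: "polyF T \<noteq> 0"
    using T by (simp add: has_corner_nonzero)
  define X where "X l = [:[:- cnj (y j l), 1:]:]" for l
  define f where "f l = X l * T + S" for l
  have f: "has_corner (f l)" "degvec (f l) = degvec T + (0, 1)" for l
    unfolding f_def X_def using corner_xbar_minus_const_mult_add[OF T S(2)] by auto
  have factor: "varXbar - constF (cnj (y j l)) + QS g y j = polyF (f l) / polyF T" for l
    unfolding f_def S(1) varXbar_minus_constF X_def[symmetric] using T0 by (simp add: field_simps)
  have "D g y j = (\<Prod>l<g j. polyF (f l) / polyF T) * (\<Prod>l<g j. polyF T)"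
    unfolding D_def factor DS by simp
  also have "\<dots> = (\<Prod>l<g j. polyF (f l) / polyF T * polyF T)"
    by (rule prod.distrib[symmetric])
  also have "\<dots> = polyF (\<Prod>l<g j. f l)"
    using T0 by (simp add: polyF_prod)
  finally have D: "D g y j = polyF (\<Prod>l<g j. f l)" .
  have "Q g y j = - (\<Sum>l<g j. polyF T / polyF (f l))"
    unfolding Q_def Qterm_def factor by simp
  then have "proper_fraction (Q g y j) (\<Prod>l<g j. f l)"
    using f by (auto simp: less_eq_prod_def intro!: proper_fraction_uminus proper_fraction_sum proper_fractionI)
  moreover have "degvec (\<Prod>l<g j. f l) = D_degvec (g j) (degvec T)"
    using f by (simp add: degvec_prod has_corner_nonzero prod_eq_iff fst_sum snd_sum D_degvec_def)
  ultimately show ?thesis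
    using D by blast
qed

lemma DS_poly_QS_proper_Suc:
  assumes "DS g y j = polyF T" "proper_fraction (QS g y j) T"
    and "D g y j = polyF d" "proper_fraction (Q g y j) d"
  shows "DS g y (Suc j) = polyF (T * barpoly d)" "proper_fraction (QS g y (Suc j)) (T * barpoly d)"
proof -
  have "DS g y (Suc j) = DS g y j * barrat (D g y j)"
    by (simp add: D_def)
  then show "DS g y (Suc j) = polyF (T * barpoly d)"
    using assms(1,3) by (simp add: barrat_polyF)
  show "proper_fraction (QS g y (Suc j)) (T * barpoly d)"
    using proper_fraction_add[OF assms(2) proper_fraction_barrat[OF assms(4)]] by (simp flip: Q_def)
qed

lemma DS_poly_QS_proper: "\<exists>T. DS g y j = polyF T \<and> proper_fraction (QS g y j) T \<and> degvec T = DS_degvec g j"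
proof (induction j)
  case 0
  then show ?case
    using proper_fraction_0 by (intro exI[of _ 1]) simp
next
  case (Suc j)
  then obtain T where T: "DS g y j = polyF T" "proper_fraction (QS g y j) T" "degvec T = DS_degvec g j"
    by blast
  then obtain d where d: "D g y j = polyF d" "proper_fraction (Q g y j) d"
    "degvec d = D_degvec (g j) (DS_degvec g j)"
    using D_poly_Q_proper_step by metis
  have "degvec (T * barpoly d) = DS_degvec g (Suc j)"
    using T(2,3) d(2,3) by (simp add: degvec_mult degvec_barpoly proper_fraction_def has_corner_nonzero)
  then show ?case
    using DS_poly_QS_proper_Suc[OF T(1,2) d(1,2)] by blast
qed

lemma D_poly_Q_proper:
  "\<exists>d. D g y j = polyF d \<and> proper_fraction (Q g y j) d \<and> degvec d = D_degvec (g j) (DS_degvec g j)"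
  using DS_poly_QS_proper D_poly_Q_proper_step by metis

lemma sum_D_degvec: "(\<Sum>k<j. D_degvec (g k) (DS_degvec g k)) = prod.swap (DS_degvec g j)"
  by (induction j) (auto simp: prod.swap_def prod_eq_iff)

lemma FK_Suc: "FK (Suc j) g z = FK j g z * (1 + int (g j) * z)"
  by (simp add: FK_def)

lemma FK_DS_degvec:
  "FK j g 1 = int (snd (DS_degvec g j)) + 1 + int (fst (DS_degvec g j)) \<and>
   FK j g (-1) = int (snd (DS_degvec g j)) + 1 - int (fst (DS_degvec g j))"
proof (induction j)
  case 0
  then show ?case by (simp add: FK_def)
next
  case (Suc j)
  then have FK: "FK j g 1 = int (snd (DS_degvec g j)) + 1 + int (fst (DS_degvec g j))"
    "FK j g (-1) = int (snd (DS_degvec g j)) + 1 - int (fst (DS_degvec g j))"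
    by simp_all
  show ?case
    unfolding FK_Suc FK by (simp add: D_degvec_def prod.swap_def algebra_simps)
qed

lemma EK_DS_degvec: "EK j g = int (snd (DS_degvec g j)) + 1"
  using FK_DS_degvec[of j g] by (simp add: EK_def)

lemma OK_DS_degvec: "OK j g = int (fst (DS_degvec g j))"
  using FK_DS_degvec[of j g] by (simp add: OK_def)

theorem proposition1:
  fixes K :: nat and g :: "nat \<Rightarrow> nat" and w :: complex and y :: "nat \<Rightarrow> nat \<Rightarrow> complex"
  assumes "K \<ge> 1" and "\<And>i. i < K \<Longrightarrow> g i > 0"
  shows "\<exists>p ph. lensP K g y w = polyF p \<and> lensPhat K g y w = polyF ph
           \<and> degvec p = degvec ph
           \<and> int (degx p) = EK K g \<and> int (degxbar p) = OK K g"
proof -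
  obtain d where d: "\<And>k. D g y k = polyF (d k) \<and> proper_fraction (Q g y k) (d k)
      \<and> degvec (d k) = D_degvec (g k) (DS_degvec g k)"
    using D_poly_Q_proper by metis
  define L where "L = [:[:- w:], 1:]"
  have L: "varX - constF w = polyF L" "has_corner L" "degvec L = (1, 0)"
    unfolding L_def by (simp_all add: varX_minus_constF corner_x_minus_const)
  define ph where "ph = L * (\<Prod>k<K. d k)"
  have D: "(\<Prod>k<K. D g y k) = polyF (\<Prod>k<K. d k)"
    using d by (simp add: polyF_prod)
  have "proper_fraction (\<Sum>k<K. Q g y k) (\<Prod>k<K. d k)"
    using d by (intro proper_fraction_sum) blast
  then obtain p where p: "lensP K g y w = polyF p" "degvec p = degvec ph"
    using polyF_add_proper_fraction[of _ _ L] L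
    unfolding lensP_def D ph_def by (auto simp: degvec_def)
  have "lensPhat K g y w = polyF ph"
    unfolding lensPhat_def L(1) D ph_def by simp
  moreover have "degvec ph = (1 + snd (DS_degvec g K), fst (DS_degvec g K))"
    using d L by (simp add: ph_def degvec_mult degvec_prod has_corner_nonzero proper_fraction_def
        sum_D_degvec prod.swap_def)
  ultimately show ?thesis
    using p by (intro exI[of _ p] exI[of _ ph]) (simp add: degvec_def EK_DS_degvec OK_DS_degvec)
qed

end
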